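(* If $\mathrm{parent}(j,r)=\langle j',r+1\rangle$, then $B(j,7\cdot 5^r)\subseteq B(j',7\cdot 5^{r+1})$.
   Context: Let $(V,d)$ be a metric space with diameter $W$, let $F\subseteq V$ be a finite set of facilities with opening costs $f_j>0$, and let $f_{\mathrm{min}}$ be the minimum opening cost. $B(x,R)$ denotes the ball of radius $R$ centered at $x$. A logradius is an integer $r$ with $f_{\mathrm{min}}\leq 5^r\leq 5W$; let $\rho_{\mathrm{max}}$ be the largest logradius. For each logradius $r$, let $J'_r=\{j\in F: f_j\leq 5^r\}$ and let $J_r$ be a maximal subset of $J'_r$ such that any two facilities in $J_r$ are at distance greater than $5^{r+1}$. Let $\Pi$ be the set of pairs $\langle j,r\rangle$ with $r$ a logradius and $j\in J_r$. An abstract tree over $\Pi$ is built: its root is the unique pair $\langle j,\rho_{\mathrm{max}}\rangle$, and for every $r<\rho_{\mathrm{max}}$ and $j\in J_r$, $\mathrm{parent}(j,r)=\langle j',r+1\rangle$ where $j'$ is the facility of $J_{r+1}$ closest to $j$ (ties broken arbitrarily). *)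

theory Defs
  imports "HOL-Analysis.Analysis"
begin

definition metric_diameter :: "'a set \<Rightarrow> ('a \<Rightarrow> 'a \<Rightarrow> real) \<Rightarrow> real" where
  "metric_diameter V d = (SUP x\<in>V. SUP y\<in>V. d x y)"

definition fmin :: "'a set \<Rightarrow> ('a \<Rightarrow> real) \<Rightarrow> real" where
  "fmin F f = Min (f ` F)"

definition is_logradius :: "real \<Rightarrow> 'a set \<Rightarrow> ('a \<Rightarrow> real) \<Rightarrow> int \<Rightarrow> bool" where
  "is_logradius W F f r \<longleftrightarrow> fmin F f \<le> (5::real) powi r \<and> (5::real) powi r \<le> 5 * W"

definition rho_max :: "real \<Rightarrow> 'a set \<Rightarrow> ('a \<Rightarrow> real) \<Rightarrow> int" where
  "rho_max W F f = (GREATEST r. is_logradius W F f r)"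

definition Jprime :: "'a set \<Rightarrow> ('a \<Rightarrow> real) \<Rightarrow> int \<Rightarrow> 'a set" where
  "Jprime F f r = {j \<in> F. f j \<le> (5::real) powi r}"

definition separated :: "('a \<Rightarrow> 'a \<Rightarrow> real) \<Rightarrow> real \<Rightarrow> 'a set \<Rightarrow> bool" where
  "separated d R S \<longleftrightarrow> (\<forall>x\<in>S. \<forall>y\<in>S. x \<noteq> y \<longrightarrow> d x y > R)"

definition maximal_separated :: "('a \<Rightarrow> 'a \<Rightarrow> real) \<Rightarrow> real \<Rightarrow> 'a set \<Rightarrow> 'a set \<Rightarrow> bool" where
  "maximal_separated d R A S \<longleftrightarrow>
     S \<subseteq> A \<and> separated d R S \<and> (\<forall>T. S \<subset> T \<and> T \<subseteq> A \<longrightarrow> \<not> separated d R T)"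

text \<open>parent(j,r) = <j', r+1>: for a pair <j,r> in Pi with r < rho_max, j' is a facility of
  J_{r+1} closest to j (any choice among ties).\<close>
definition is_parent ::
  "('a \<Rightarrow> 'a \<Rightarrow> real) \<Rightarrow> real \<Rightarrow> 'a set \<Rightarrow> ('a \<Rightarrow> real) \<Rightarrow> (int \<Rightarrow> 'a set)
     \<Rightarrow> 'a \<Rightarrow> int \<Rightarrow> 'a \<Rightarrow> bool" where
  "is_parent d W F f J j r j' \<longleftrightarrow>
     is_logradius W F f r \<and> j \<in> J r \<and> r < rho_max W F f \<and>
     j' \<in> J (r + 1) \<and> (\<forall>k\<in>J (r + 1). d j j' \<le> d j k)"

end

theory Submission
  imports Defs
begin

text \<open>The parent j' is at distance at most 5^(r+2) from j: j is a candidate for J_(r+1) (its cost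
  is at most 5^r), so by maximality of J_(r+1) some member lies within 5^(r+2) of j, and j' is the
  closest one. Since 7 * 5^r + 25 * 5^r \<le> 7 * 5^(r+1), the triangle inequality gives the inclusion.
  The hypothesis on J applies at r+1 because logradii form an interval and r < rho_max.\<close>

lemma is_logradius_le_ceiling:
  assumes "is_logradius W F f r"
  shows "r \<le> max 0 \<lceil>5 * W\<rceil>"
proof (rule ccontr)
  assume "\<not> ?thesis"
  hence r: "r > 0" "r > \<lceil>5 * W\<rceil>" by auto
  have "real (nat r) < 2 ^ nat r" by (rule of_nat_less_two_power)
  also have "(2::real) ^ nat r \<le> 5 ^ nat r" by (rule power_mono) auto
  also have "\<dots> = 5 powi r" using r by (simp add: power_int_def)
  finally have "real_of_int r < 5 powi r" using r by simp
  moreover have "5 * W < real_of_int r" using r by linarith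
  ultimately show False using assms unfolding is_logradius_def by linarith
qed

lemma is_logradius_rho_max:
  assumes "is_logradius W F f r"
  shows "is_logradius W F f (rho_max W F f) \<and> r \<le> rho_max W F f"
proof -
  define S where "S = {s. is_logradius W F f s \<and> r \<le> s}"
  have "finite S"
    by (rule finite_subset[of _ "{r..max 0 \<lceil>5 * W\<rceil>}"])
       (auto simp: S_def dest: is_logradius_le_ceiling)
  moreover have "r \<in> S" using assms by (simp add: S_def)
  ultimately have max_in: "Max S \<in> S" and max_ge: "\<And>s. s \<in> S \<Longrightarrow> s \<le> Max S"
    by (auto intro: Max_in)
  have "rho_max W F f = Max S"
    unfolding rho_max_def
  proof (rule Greatest_equality)
    show "is_logradius W F f (Max S)" using max_in by (simp add: S_def)
  next
    fix s assume "is_logradius W F f s"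
    then show "s \<le> Max S"
      using max_in max_ge[of s] by (cases "r \<le> s") (auto simp: S_def)
  qed
  then show ?thesis using max_in by (simp add: S_def)
qed

lemma is_logradius_between:
  assumes "is_logradius W F f r" "is_logradius W F f t" "r \<le> s" "s \<le> t"
  shows "is_logradius W F f s"
proof -
  have "(5::real) powi r \<le> 5 powi s" "(5::real) powi s \<le> 5 powi t"
    using assms(3,4) by (auto intro: power_int_increasing)
  then show ?thesis using assms(1,2) unfolding is_logradius_def by linarith
qed

lemma Jprime_mono:
  assumes "r \<le> s"
  shows "Jprime F f r \<subseteq> Jprime F f s"
proof -
  have "(5::real) powi r \<le> 5 powi s" using assms by (auto intro: power_int_increasing)
  then show ?thesis unfolding Jprime_def by auto
qed

lemma maximal_separated_subset: "maximal_separated d R A S \<Longrightarrow> S \<subseteq> A"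
  by (simp add: maximal_separated_def)

lemma (in Metric_space) maximal_separated_near:
  assumes "maximal_separated d R A S" "A \<subseteq> M" "0 \<le> R" "x \<in> A"
  shows "\<exists>k\<in>S. d x k \<le> R"
proof (cases "x \<in> S")
  case True
  then show ?thesis using assms(2,3,4) by force
next
  case False
  have sep: "separated d R S"
    using assms(1) by (simp add: maximal_separated_def)
  have "\<not> separated d R (insert x S)"
    using assms(1,4) False unfolding maximal_separated_def by blast
  then obtain y z where yz: "y \<in> insert x S" "z \<in> insert x S" "y \<noteq> z" "d y z \<le> R"
    unfolding separated_def by force
  with sep have "x = y \<or> x = z" unfolding separated_def by force
  with yz show ?thesis using commute by auto
qed

theorem lemma2:
  fixes V :: "'a set" and d :: "'a \<Rightarrow> 'a \<Rightarrow> real" and F :: "'a set"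
    and f :: "'a \<Rightarrow> real" and W :: real and J :: "int \<Rightarrow> 'a set"
    and j j' :: 'a and r :: int
  assumes "Metric_space V d"
    and "Metric_space.mbounded V d V" and "V \<noteq> {}"
    and "W = metric_diameter V d"
    and "F \<subseteq> V" and "finite F" and "F \<noteq> {}"
    and "\<forall>j\<in>F. f j > 0"
    and "\<forall>r. is_logradius W F f r \<longrightarrow>
            maximal_separated d ((5::real) powi (r + 1)) (Jprime F f r) (J r)"
    and "is_parent d W F f J j r j'"
  shows "Metric_space.mball V d j (7 * (5::real) powi r)
           \<subseteq> Metric_space.mball V d j' (7 * (5::real) powi (r + 1))"
proof -
  interpret Metric_space V d by fact
  have r: "is_logradius W F f r" and "j \<in> J r" "r < rho_max W F f"
    and j': "j' \<in> J (r + 1)" "\<forall>k\<in>J (r + 1). d j j' \<le> d j k"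
    using assms(10) by (auto simp: is_parent_def)
  have "is_logradius W F f (r + 1)"
    using is_logradius_rho_max[OF r] \<open>r < rho_max W F f\<close>
    by (auto intro: is_logradius_between[OF r, of "rho_max W F f"])
  then have J_next: "maximal_separated d (5 powi (r + 1 + 1)) (Jprime F f (r + 1)) (J (r + 1))"
    using assms(9) by blast
  have "j \<in> Jprime F f r"
    using assms(9) r \<open>j \<in> J r\<close> maximal_separated_subset by blast
  then have "j \<in> Jprime F f (r + 1)" using Jprime_mono[of r "r + 1" F f] by auto
  moreover have Jprime_V: "Jprime F f (r + 1) \<subseteq> V" using assms(5) by (auto simp: Jprime_def)
  moreover have "(0::real) \<le> 5 powi (r + 1 + 1)" by simp
  ultimately obtain k where "k \<in> J (r + 1)" "d j k \<le> 5 powi (r + 1 + 1)"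
    using maximal_separated_near[OF J_next] by blast
  then have "d j j' \<le> 5 powi (r + 1 + 1)" using j'(2) by (meson order_trans)
  moreover have "(5::real) powi (r + 1) = 5 * 5 powi r"
    and "(5::real) powi (r + 1 + 1) = 5 * 5 powi (r + 1)"
    by (rule power_int_add_1', simp)+
  moreover have "(0::real) < 5 powi r" by simp
  ultimately have "d j j' + 7 * 5 powi r \<le> 7 * 5 powi (r + 1)"
    by linarith
  moreover have "j' \<in> V" using j' J_next Jprime_V maximal_separated_subset by blast
  ultimately show ?thesis by (rule mball_subset)
qed

end
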